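(* Let $P$ be a natural unit interval order. For every finite multiset $\beta$ of elements of $P$, $W_\beta(t)\in(I^P_T)^\perp$. Moreover, $\{W_\beta(t)\}$, as $\beta$ ranges over all finite multisets of elements of $P$, is a $\mathbb{Q}(t)$-basis of $(I^P_T)^\perp\subseteq\mathbb{Q}(t)\otimes\mathcal{U}_P^*$.
   Context: A natural unit interval order is a finite poset $P$ with a total order $<$ on $P$ such that $a<_Pb$ implies $a<b$, and if $a\sim_Pb$, $b\sim_Pc$, $a<_Pc$ then $a<b<c$ (here $\sim_P$ means incomparable or equal). $\mathcal{U}_P=\mathbb{Z}\langle u_a:a\in P\rangle$; $\mathcal{U}_P^*$ is the free module on words in $P$, with pairing $\langle\mathbf{u}_w,v\rangle=\delta_{vw}$ extended $\mathbb{Q}(t)$-bilinearly; $I^\perp$ is the set of $\gamma$ with $\langle z,\gamma\rangle=0$ for all $z\in I$. $I^P_T\subseteq\mathbb{Q}(t)\otimes\mathcal{U}_P$ is the ideal generated by $u_cu_a-u_au_c$ ($a<_Pc$) and $u_bu_a-t\,u_au_b$ ($a<b$, $a\sim_Pb$). For a word $w$, $\mathrm{inv}_P(w)=\#\{(i,j): i<j,\ w_i>w_j,\ w_i\sim_Pw_j\}$. The content of a word is its multiset of letters; $W_\beta(t)=\sum t^{\mathrm{inv}_P(w)}w$ over all words $w$ of content $\beta$. *)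

theory Defs
  imports "HOL-Computational_Algebra.Polynomial" "HOL-Computational_Algebra.Fraction_Field"
          "HOL-Library.Multiset" "HOL-Library.Function_Algebras"
begin

type_synonym qt = "rat poly fract"

definition tt :: qt where "tt = Fract [:0, 1:] 1"

text \<open>P is a finite set of elements of a linearly ordered type; the type's order is
  the total order <.  ltP is the strict order of the poset P.\<close>

definition incP :: "('a \<Rightarrow> 'a \<Rightarrow> bool) \<Rightarrow> 'a \<Rightarrow> 'a \<Rightarrow> bool" where
  "incP ltP a b \<longleftrightarrow> \<not> ltP a b \<and> \<not> ltP b a"

definition nuio :: "'a::linorder set \<Rightarrow> ('a \<Rightarrow> 'a \<Rightarrow> bool) \<Rightarrow> bool" where
  "nuio P ltP \<longleftrightarrow> finite P
     \<and> (\<forall>a\<in>P. \<not> ltP a a)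
     \<and> (\<forall>a\<in>P. \<forall>b\<in>P. \<forall>c\<in>P. ltP a b \<and> ltP b c \<longrightarrow> ltP a c)
     \<and> (\<forall>a\<in>P. \<forall>b\<in>P. ltP a b \<longrightarrow> a < b)
     \<and> (\<forall>a\<in>P. \<forall>b\<in>P. \<forall>c\<in>P. incP ltP a b \<and> incP ltP b c \<and> ltP a c \<longrightarrow> a < b \<and> b < c)"

text \<open>Elements of Q(t) \<otimes> U_P and of Q(t) \<otimes> U_P^*: finitely supported Q(t)-valued
  functions on words, supported on words with letters in P.\<close>
definition fsupp :: "'a set \<Rightarrow> ('a list \<Rightarrow> qt) set" where
  "fsupp P = {f. finite {w. f w \<noteq> 0} \<and> (\<forall>w. f w \<noteq> 0 \<longrightarrow> set w \<subseteq> P)}"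

definition word :: "'a list \<Rightarrow> 'a list \<Rightarrow> qt" where
  "word v = (\<lambda>w. if w = v then 1 else 0)"

definition fmult :: "('a list \<Rightarrow> qt) \<Rightarrow> ('a list \<Rightarrow> qt) \<Rightarrow> 'a list \<Rightarrow> qt" where
  "fmult f g = (\<lambda>w. \<Sum>i\<le>length w. f (take i w) * g (drop i w))"

definition scal :: "qt \<Rightarrow> ('a list \<Rightarrow> qt) \<Rightarrow> 'a list \<Rightarrow> qt" where
  "scal c f = (\<lambda>w. c * f w)"

definition gensT :: "'a::linorder set \<Rightarrow> ('a \<Rightarrow> 'a \<Rightarrow> bool) \<Rightarrow> ('a list \<Rightarrow> qt) set" where
  "gensT P ltP =
     {word [c, a] - word [a, c] | a c. a \<in> P \<and> c \<in> P \<and> ltP a c}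
   \<union> {word [b, a] - scal tt (word [a, b]) | a b. a \<in> P \<and> b \<in> P \<and> a < b \<and> incP ltP a b}"

inductive_set ideal_gen :: "'a set \<Rightarrow> ('a list \<Rightarrow> qt) set \<Rightarrow> ('a list \<Rightarrow> qt) set"
  for P G where
  gen: "r \<in> G \<Longrightarrow> r \<in> ideal_gen P G"
| zero: "0 \<in> ideal_gen P G"
| add: "x \<in> ideal_gen P G \<Longrightarrow> y \<in> ideal_gen P G \<Longrightarrow> x + y \<in> ideal_gen P G"
| lmult: "x \<in> ideal_gen P G \<Longrightarrow> a \<in> fsupp P \<Longrightarrow> fmult a x \<in> ideal_gen P G"
| rmult: "x \<in> ideal_gen P G \<Longrightarrow> a \<in> fsupp P \<Longrightarrow> fmult x a \<in> ideal_gen P G"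

definition IT :: "'a::linorder set \<Rightarrow> ('a \<Rightarrow> 'a \<Rightarrow> bool) \<Rightarrow> ('a list \<Rightarrow> qt) set" where
  "IT P ltP = ideal_gen P (gensT P ltP)"

text \<open>The pairing: <u_w, v> = delta_{vw}, extended bilinearly.\<close>
definition pairing :: "('a list \<Rightarrow> qt) \<Rightarrow> ('a list \<Rightarrow> qt) \<Rightarrow> qt" where
  "pairing z \<gamma> = (\<Sum>w\<in>{w. z w \<noteq> 0}. z w * \<gamma> w)"

definition perp :: "'a set \<Rightarrow> ('a list \<Rightarrow> qt) set \<Rightarrow> ('a list \<Rightarrow> qt) set" where
  "perp P I = {\<gamma> \<in> fsupp P. \<forall>z\<in>I. pairing z \<gamma> = 0}"

definition invP :: "('a::linorder \<Rightarrow> 'a \<Rightarrow> bool) \<Rightarrow> 'a list \<Rightarrow> nat" where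
  "invP ltP w = card {(i, j). i < j \<and> j < length w \<and> w ! i > w ! j \<and> incP ltP (w ! i) (w ! j)}"

definition Wt :: "('a::linorder \<Rightarrow> 'a \<Rightarrow> bool) \<Rightarrow> 'a multiset \<Rightarrow> 'a list \<Rightarrow> qt" where
  "Wt ltP \<beta> = (\<lambda>w. if mset w = \<beta> then tt ^ invP ltP w else 0)"

end

theory Submission
  imports Defs
begin

text \<open>A functional \<gamma> annihilates the ideal generated by G iff it annihilates every x g y
  with g \<in> G and x, y words; for the generators of I_T^P this says exactly that \<gamma> is
  invariant under swapping adjacent comparable letters and picks up a factor t when two
  adjacent incomparable letters are put out of order. Such a \<gamma> is therefore determined
  by its values on sorted words, \<gamma>(w) = t^inv(w) \<gamma>(sort w): sorting by adjacent swaps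
  changes inv_P by one exactly at the incomparable swaps, where the natural unit interval
  order axioms guarantee that a < b forces a <_P b or a \<sim>_P b. Hence \<gamma> is the
  combination of the W_\<beta> with coefficients \<gamma>(sort \<beta>), and the W_\<beta> are independent because
  they have pairwise disjoint nonempty supports.\<close>

section \<open>Counting inversions\<close>

definition inversions :: "('a \<Rightarrow> 'a \<Rightarrow> bool) \<Rightarrow> 'a list \<Rightarrow> nat" where
  "inversions R w = card {(i, j). i < j \<and> j < length w \<and> R (w ! i) (w ! j)}"

lemma invP_eq_inversions: "invP ltP w = inversions (\<lambda>x y. y < x \<and> incP ltP x y) w"
  by (simp add: invP_def inversions_def)

lemma inversions_Cons: "inversions R (a # w) = length (filter (R a) w) + inversions R w"
proof -
  let ?S = "\<lambda>w. {(i, j). i < j \<and> j < length w \<and> R (w ! i) (w ! j)}"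
  let ?A = "(\<lambda>j. (0::nat, Suc j)) ` {j. j < length w \<and> R a (w ! j)}"
  let ?B = "(\<lambda>(i, j). (Suc i, Suc j)) ` ?S w"
  have "finite (?S w)"
    by (rule finite_subset[of _ "{..<length w} \<times> {..<length w}"]) auto
  have "?S (a # w) = ?A \<union> ?B"
  proof (intro set_eqI iffI)
    fix p assume p: "p \<in> ?S (a # w)"
    then obtain i j' where ij: "p = (i, Suc j')"
      by (cases p; case_tac "snd p") auto
    show "p \<in> ?A \<union> ?B"
    proof (cases i)
      case (Suc i')
      then have "(i', j') \<in> ?S w" using p ij by auto
      then show ?thesis using ij Suc by (auto intro!: image_eqI[of _ _ "(i', j')"])
    qed (use p ij in auto)
  qed auto
  moreover have "?A \<inter> ?B = {}" by auto
  ultimately have "card (?S (a # w)) = card ?A + card ?B"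
    using \<open>finite (?S w)\<close> by (simp add: card_Un_disjoint)
  also have "card ?A = length (filter (R a) w)"
    by (subst card_image) (auto simp: inj_on_def length_filter_conv_card)
  also have "card ?B = card (?S w)"
    by (rule card_image) (auto simp: inj_on_def)
  finally show ?thesis by (simp add: inversions_def)
qed

lemma inversions_append_cong:
  assumes "mset u = mset v" "inversions R u + k = inversions R v + m"
  shows "inversions R (x @ u) + k = inversions R (x @ v) + m"
proof (induction x)
  case (Cons e x)
  have "length (filter (R e) (x @ u)) = length (filter (R e) (x @ v))"
    by (metis assms(1) mset_append mset_filter size_mset)
  with Cons show ?case by (simp add: inversions_Cons)
qed (use assms in simp)

lemma inversions_swap:
  "inversions R (x @ [b, a] @ y) + (if R a b then 1 else 0)
   = inversions R (x @ [a, b] @ y) + (if R b a then 1 else 0)"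
  by (rule inversions_append_cong) (auto simp: inversions_Cons)

lemma inversions_sorted:
  assumes "sorted w" shows "inversions (\<lambda>x y. y < x \<and> Q x y) w = 0"
proof -
  have "w ! i \<le> w ! j" if "i < j" "j < length w" for i j
    using sorted_nth_mono[OF assms] that by simp
  then have "{(i, j). i < j \<and> j < length w \<and> w ! j < w ! i \<and> Q (w ! i) (w ! j)} = {}"
    by (auto simp: not_less[symmetric])
  then show ?thesis unfolding inversions_def by (metis card.empty)
qed

lemma unsorted_obtains_descent:
  fixes w :: "'a::linorder list"
  assumes "\<not> sorted w"
  obtains x a b y where "w = x @ [b, a] @ y" "a < b"
  using assms
proof (induction w arbitrary: thesis)
  case (Cons c w)
  show ?case
  proof (cases w)
    case (Cons d r)
    show ?thesis
    proof (cases "d < c")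
      case True
      with Cons show ?thesis using Cons.prems(1)[of "[]"] by simp
    next
      case False
      with Cons \<open>\<not> sorted (c # w)\<close> have "\<not> sorted w" by (auto simp: not_less intro: order_trans)
      then show ?thesis using Cons.IH Cons.prems(1)[of "c # _"] by (metis append_Cons)
    qed
  qed (use Cons in simp)
qed simp

abbreviation supp :: "('a list \<Rightarrow> qt) \<Rightarrow> 'a list set" where
  "supp z \<equiv> {w. z w \<noteq> 0}"

interpretation word_fun: module "scal :: qt \<Rightarrow> ('a list \<Rightarrow> qt) \<Rightarrow> 'a list \<Rightarrow> qt"
  by unfold_locales (auto simp: scal_def fun_eq_iff algebra_simps)

lemma sum_apply: "(\<Sum>a\<in>A. f a) x = (\<Sum>a\<in>A. f a x)"
  by (induction A rule: infinite_finite_induct) auto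

lemma finite_supp_add: "finite (supp f) \<Longrightarrow> finite (supp g) \<Longrightarrow> finite (supp (f + g))"
  by (rule finite_subset[of _ "supp f \<union> supp g"]) auto

lemma finite_supp_scal: "finite (supp f) \<Longrightarrow> finite (supp (scal c f))"
  by (rule finite_subset[of _ "supp f"]) (auto simp: scal_def)

lemma finite_supp_sum:
  "(\<And>k. k \<in> A \<Longrightarrow> finite (supp (f k))) \<Longrightarrow> finite (supp (\<Sum>k\<in>A. f k))"
  by (induction A rule: infinite_finite_induct) (auto intro!: finite_supp_add[unfolded plus_fun_def])

lemma finite_supp_word: "finite (supp (word u))"
  by (rule finite_subset[of _ "{u}"]) (auto simp: word_def)

lemma finite_supp_fmult:
  assumes "finite (supp f)" "finite (supp g)"
  shows "finite (supp (fmult f g))"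
proof (rule finite_subset)
  show "supp (fmult f g) \<subseteq> (\<lambda>(u, v). u @ v) ` (supp f \<times> supp g)"
  proof
    fix w assume "w \<in> supp (fmult f g)"
    then obtain i where "f (take i w) * g (drop i w) \<noteq> 0"
      unfolding fmult_def by (auto intro: sum.not_neutral_contains_not_neutral)
    then show "w \<in> (\<lambda>(u, v). u @ v) ` (supp f \<times> supp g)"
      by (intro rev_image_eqI[of "(take i w, drop i w)"]) auto
  qed
qed (use assms in simp)

lemma word_in_fsupp: "set u \<subseteq> P \<Longrightarrow> word u \<in> fsupp P"
  by (auto simp: fsupp_def finite_supp_word word_def)

lemma sum_word_expansion:
  assumes "finite (supp f)" shows "(\<Sum>u\<in>supp f. scal (f u) (word u)) = f"
proof
  fix w
  have "(\<Sum>u\<in>supp f. scal (f u) (word u)) w = (\<Sum>u\<in>supp f. if u = w then f u else 0)"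
    by (auto simp: sum_apply scal_def word_def intro!: sum.cong)
  also have "\<dots> = f w" using assms by simp
  finally show "(\<Sum>u\<in>supp f. scal (f u) (word u)) w = f w" .
qed

lemma fmult_word_left:
  "fmult (word u) f w = (if take (length u) w = u then f (drop (length u) w) else 0)"
proof -
  have "fmult (word u) f w
        = (\<Sum>i\<le>length w. if i = length u \<and> take (length u) w = u then f (drop i w) else 0)"
    unfolding fmult_def word_def by (rule sum.cong) (auto dest: arg_cong[of _ _ length])
  then show ?thesis by (auto dest: arg_cong[of _ _ length])
qed

lemma fmult_word_right:
  "fmult f (word v) w = (if length v \<le> length w \<and> drop (length w - length v) w = v
                         then f (take (length w - length v) w) else 0)"
proof -
  have "fmult f (word v) w
        = (\<Sum>i\<le>length w. if i = length w - length v \<and> length v \<le> length w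
                             \<and> drop (length w - length v) w = v then f (take i w) else 0)"
    unfolding fmult_def word_def by (rule sum.cong) (auto dest: arg_cong[of _ _ length])
  then show ?thesis by auto
qed

lemma supp_fmult_word_left: "supp (fmult (word u) f) = (\<lambda>s. u @ s) ` supp f"
  by (auto simp: fmult_word_left image_iff split: if_splits) (metis append_take_drop_id)

lemma supp_fmult_word_right: "supp (fmult f (word v)) = (\<lambda>s. s @ v) ` supp f"
  by (auto simp: fmult_word_right image_iff split: if_splits) (metis append_take_drop_id)

lemma fmult_sum_left: "fmult (\<Sum>k\<in>A. f k) g = (\<Sum>k\<in>A. fmult (f k) g)"
  by (rule ext) (simp add: fmult_def sum_apply sum_distrib_right sum.swap[of _ _ A])

lemma fmult_sum_right: "fmult f (\<Sum>k\<in>A. g k) = (\<Sum>k\<in>A. fmult f (g k))"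
  by (rule ext) (simp add: fmult_def sum_apply sum_distrib_left sum.swap[of _ _ A])

lemma fmult_scal_left: "fmult (scal c f) g = scal c (fmult f g)"
  by (simp add: fmult_def scal_def fun_eq_iff sum_distrib_left mult.assoc)

lemma fmult_scal_right: "fmult f (scal c g) = scal c (fmult f g)"
  by (simp add: fmult_def scal_def fun_eq_iff sum_distrib_left algebra_simps)

lemma pairing_supp_superset:
  assumes "finite S" "supp z \<subseteq> S"
  shows "pairing z \<gamma> = (\<Sum>w\<in>S. z w * \<gamma> w)"
  unfolding pairing_def by (rule sum.mono_neutral_left) (use assms in auto)

lemma pairing_add:
  assumes "finite (supp f)" "finite (supp g)"
  shows "pairing (f + g) \<gamma> = pairing f \<gamma> + pairing g \<gamma>"
proof -
  let ?S = "supp f \<union> supp g"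
  have "pairing (f + g) \<gamma> = (\<Sum>w\<in>?S. f w * \<gamma> w) + (\<Sum>w\<in>?S. g w * \<gamma> w)"
    using assms by (subst pairing_supp_superset[of ?S]) (auto simp: sum.distrib distrib_right)
  also have "\<dots> = pairing f \<gamma> + pairing g \<gamma>"
    using assms by (simp add: pairing_supp_superset[of ?S])
  finally show ?thesis .
qed

lemma pairing_scal: "pairing (scal c f) \<gamma> = c * pairing f \<gamma>"
proof (cases "c = 0")
  case False
  then have "supp (scal c f) = supp f" by (auto simp: scal_def)
  then show ?thesis by (simp add: pairing_def scal_def sum_distrib_left mult.assoc)
qed (simp add: pairing_def scal_def)

lemma pairing_sum:
  "(\<And>k. k \<in> A \<Longrightarrow> finite (supp (f k))) \<Longrightarrow> pairing (\<Sum>k\<in>A. f k) \<gamma> = (\<Sum>k\<in>A. pairing (f k) \<gamma>)"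
proof (induction A rule: infinite_finite_induct)
  case (insert x F)
  then show ?case by (simp add: pairing_add[unfolded plus_fun_def] finite_supp_sum)
qed (simp_all add: pairing_def)

lemma pairing_add_right: "pairing z (\<gamma> + \<delta>) = pairing z \<gamma> + pairing z \<delta>"
  by (simp add: pairing_def sum.distrib distrib_left)

lemma pairing_scal_right: "pairing z (scal c \<gamma>) = c * pairing z \<gamma>"
  by (simp add: pairing_def scal_def sum_distrib_left algebra_simps)

lemma pairing_binomial:
  assumes "p \<noteq> q"
  shows "pairing (word p - scal c (word q)) \<gamma> = \<gamma> p - c * \<gamma> q"
  using assms by (subst pairing_supp_superset[of "{p, q}"]) (auto simp: word_def scal_def)

lemma pairing_fmult_word_left:
  "pairing (fmult (word u) f) \<gamma> = pairing f (\<lambda>s. \<gamma> (u @ s))"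
  unfolding pairing_def supp_fmult_word_left
  by (subst sum.reindex) (auto simp: fmult_word_left inj_on_def)

lemma pairing_fmult_word_right:
  "pairing (fmult f (word v)) \<gamma> = pairing f (\<lambda>s. \<gamma> (s @ v))"
  unfolding pairing_def supp_fmult_word_right
  by (subst sum.reindex) (auto simp: fmult_word_right inj_on_def)

lemma pairing_fmult_left:
  assumes "finite (supp f)" "finite (supp g)"
  shows "pairing (fmult f g) \<gamma> = (\<Sum>u\<in>supp f. f u * pairing g (\<lambda>s. \<gamma> (u @ s)))"
proof -
  have "fmult f g = (\<Sum>u\<in>supp f. scal (f u) (fmult (word u) g))"
    by (subst sum_word_expansion[OF assms(1), symmetric]) (simp add: fmult_sum_left fmult_scal_left)
  then show ?thesis using assms
    by (simp add: pairing_sum pairing_scal pairing_fmult_word_left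
                  finite_supp_scal finite_supp_fmult finite_supp_word)
qed

lemma pairing_fmult_right:
  assumes "finite (supp f)" "finite (supp g)"
  shows "pairing (fmult f g) \<gamma> = (\<Sum>v\<in>supp g. g v * pairing f (\<lambda>s. \<gamma> (s @ v)))"
proof -
  have "fmult f g = (\<Sum>v\<in>supp g. scal (g v) (fmult f (word v)))"
    by (subst sum_word_expansion[OF assms(2), symmetric]) (simp add: fmult_sum_right fmult_scal_right)
  then show ?thesis using assms
    by (simp add: pairing_sum pairing_scal pairing_fmult_word_right
                  finite_supp_scal finite_supp_fmult finite_supp_word)
qed

section \<open>Annihilators of two-sided ideals\<close>

definition annihilates_multiples :: "'a set \<Rightarrow> ('a list \<Rightarrow> qt) set \<Rightarrow> ('a list \<Rightarrow> qt) \<Rightarrow> bool" where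
  "annihilates_multiples P G \<gamma> \<longleftrightarrow>
     (\<forall>g\<in>G. \<forall>x y. set x \<subseteq> P \<longrightarrow> set y \<subseteq> P \<longrightarrow> pairing g (\<lambda>s. \<gamma> (x @ s @ y)) = 0)"

lemma annihilates_multiples_shift_left:
  assumes "annihilates_multiples P G \<gamma>" "set u \<subseteq> P"
  shows "annihilates_multiples P G (\<lambda>s. \<gamma> (u @ s))"
  unfolding annihilates_multiples_def
proof (intro ballI allI impI)
  fix g x y assume "g \<in> G" "set x \<subseteq> P" "set y \<subseteq> P"
  then show "pairing g (\<lambda>s. \<gamma> (u @ x @ s @ y)) = 0"
    using assms(1)[unfolded annihilates_multiples_def, rule_format, of g "u @ x" y] assms(2)
    by simp
qed

lemma annihilates_multiples_shift_right:
  assumes "annihilates_multiples P G \<gamma>" "set v \<subseteq> P"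
  shows "annihilates_multiples P G (\<lambda>s. \<gamma> (s @ v))"
  using assms unfolding annihilates_multiples_def by simp

lemma ideal_gen_annihilated:
  assumes gens: "\<And>g. g \<in> G \<Longrightarrow> finite (supp g)" and z: "z \<in> ideal_gen P G"
  shows "finite (supp z) \<and> (\<forall>\<gamma>. annihilates_multiples P G \<gamma> \<longrightarrow> pairing z \<gamma> = 0)"
  using z
proof induction
  case (gen g)
  have "pairing g \<gamma> = 0" if "annihilates_multiples P G \<gamma>" for \<gamma>
    using that[unfolded annihilates_multiples_def, rule_format, OF gen, of "[]" "[]"] by simp
  with gen gens show ?case by blast
next
  case zero
  then show ?case by (simp add: pairing_def)
next
  case (add z z')
  then show ?case by (simp add: finite_supp_add[unfolded plus_fun_def] pairing_add[unfolded plus_fun_def])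
next
  case (lmult z a)
  have a: "finite (supp a)" "\<And>u. u \<in> supp a \<Longrightarrow> set u \<subseteq> P"
    using lmult.hyps(2) by (auto simp: fsupp_def)
  have "pairing (fmult a z) \<gamma> = 0" if \<gamma>: "annihilates_multiples P G \<gamma>" for \<gamma>
  proof -
    have "pairing z (\<lambda>s. \<gamma> (u @ s)) = 0" if "u \<in> supp a" for u
      using lmult.IH annihilates_multiples_shift_left[OF \<gamma> a(2)[OF that]] by blast
    then show ?thesis using a lmult.IH by (simp add: pairing_fmult_left)
  qed
  with a lmult.IH show ?case by (simp add: finite_supp_fmult)
next
  case (rmult z a)
  have a: "finite (supp a)" "\<And>v. v \<in> supp a \<Longrightarrow> set v \<subseteq> P"
    using rmult.hyps(2) by (auto simp: fsupp_def)
  have "pairing (fmult z a) \<gamma> = 0" if \<gamma>: "annihilates_multiples P G \<gamma>" for \<gamma>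
  proof -
    have "pairing z (\<lambda>s. \<gamma> (s @ v)) = 0" if "v \<in> supp a" for v
      using rmult.IH annihilates_multiples_shift_right[OF \<gamma> a(2)[OF that]] by blast
    then show ?thesis using a rmult.IH by (simp add: pairing_fmult_right)
  qed
  with a rmult.IH show ?case by (simp add: finite_supp_fmult)
qed

lemma annihilates_ideal_gen_iff:
  assumes "\<And>g. g \<in> G \<Longrightarrow> finite (supp g)"
  shows "(\<forall>z\<in>ideal_gen P G. pairing z \<gamma> = 0) \<longleftrightarrow> annihilates_multiples P G \<gamma>"
proof
  assume \<gamma>: "\<forall>z\<in>ideal_gen P G. pairing z \<gamma> = 0"
  show "annihilates_multiples P G \<gamma>"
    unfolding annihilates_multiples_def
  proof (intro ballI allI impI)
    fix g x y assume "g \<in> G" "set x \<subseteq> P" "set y \<subseteq> P"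
    then have "pairing (fmult (word x) (fmult g (word y))) \<gamma> = 0"
      using \<gamma> by (blast intro: ideal_gen.intros word_in_fsupp)
    then show "pairing g (\<lambda>s. \<gamma> (x @ s @ y)) = 0"
      by (simp add: pairing_fmult_word_left pairing_fmult_word_right)
  qed
qed (use assms ideal_gen_annihilated in blast)

section \<open>The orthogonal complement of I_T^P\<close>

definition respects_IT :: "'a::linorder set \<Rightarrow> ('a \<Rightarrow> 'a \<Rightarrow> bool) \<Rightarrow> ('a list \<Rightarrow> qt) \<Rightarrow> bool" where
  "respects_IT P ltP \<gamma> \<longleftrightarrow>
    (\<forall>x y a c. set x \<subseteq> P \<longrightarrow> set y \<subseteq> P \<longrightarrow> a \<in> P \<longrightarrow> c \<in> P \<longrightarrow> ltP a c \<longrightarrow>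
        \<gamma> (x @ [c, a] @ y) = \<gamma> (x @ [a, c] @ y))
  \<and> (\<forall>x y a b. set x \<subseteq> P \<longrightarrow> set y \<subseteq> P \<longrightarrow> a \<in> P \<longrightarrow> b \<in> P \<longrightarrow> a < b \<longrightarrow> incP ltP a b \<longrightarrow>
        \<gamma> (x @ [b, a] @ y) = tt * \<gamma> (x @ [a, b] @ y))"

lemma respects_ITD:
  assumes "respects_IT P ltP \<gamma>" "set x \<subseteq> P" "set y \<subseteq> P"
  shows "a \<in> P \<Longrightarrow> b \<in> P \<Longrightarrow> ltP a b \<Longrightarrow> \<gamma> (x @ [b, a] @ y) = \<gamma> (x @ [a, b] @ y)"
    and "a \<in> P \<Longrightarrow> b \<in> P \<Longrightarrow> a < b \<Longrightarrow> incP ltP a b \<Longrightarrow> \<gamma> (x @ [b, a] @ y) = tt * \<gamma> (x @ [a, b] @ y)"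
  using assms unfolding respects_IT_def by blast+

lemma nuio_less: "nuio P ltP \<Longrightarrow> a \<in> P \<Longrightarrow> b \<in> P \<Longrightarrow> ltP a b \<Longrightarrow> a < b"
  unfolding nuio_def by blast

lemma finite_supp_binomial: "finite (supp (word p - scal c (word q)))"
  by (rule finite_subset[of _ "{p, q}"]) (auto simp: word_def scal_def)

lemma gensT_annihilated_iff:
  assumes "nuio P ltP"
  shows "annihilates_multiples P (gensT P ltP) \<gamma> \<longleftrightarrow> respects_IT P ltP \<gamma>"
proof -
  have comparable_ne: "[c, a] \<noteq> [a, c]" if "a \<in> P" "c \<in> P" "ltP a c" for a c
    using nuio_less[OF assms that] by auto
  have less_ne: "[b, a] \<noteq> [a, b]" if "a < b" for a b :: 'a
    using that by auto
  show ?thesis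
    unfolding annihilates_multiples_def
  proof
    assume H: "\<forall>g\<in>gensT P ltP. \<forall>x y. set x \<subseteq> P \<longrightarrow> set y \<subseteq> P \<longrightarrow> pairing g (\<lambda>s. \<gamma> (x @ s @ y)) = 0"
    show "respects_IT P ltP \<gamma>"
      unfolding respects_IT_def
    proof (intro conjI allI impI)
      fix x y a c assume xy: "set x \<subseteq> P" "set y \<subseteq> P" and ac: "a \<in> P" "c \<in> P" "ltP a c"
      then have "word [c, a] - word [a, c] \<in> gensT P ltP" unfolding gensT_def by blast
      then show "\<gamma> (x @ [c, a] @ y) = \<gamma> (x @ [a, c] @ y)"
        using H[rule_format, OF _ xy] pairing_binomial[OF comparable_ne[OF ac], of 1 "\<lambda>s. \<gamma> (x @ s @ y)"]
        by simp
    next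
      fix x y a b assume xy: "set x \<subseteq> P" "set y \<subseteq> P" and ab: "a \<in> P" "b \<in> P" "a < b" "incP ltP a b"
      then have "word [b, a] - scal tt (word [a, b]) \<in> gensT P ltP" unfolding gensT_def by blast
      then show "\<gamma> (x @ [b, a] @ y) = tt * \<gamma> (x @ [a, b] @ y)"
        using H[rule_format, OF _ xy] pairing_binomial[OF less_ne[OF ab(3)], of tt "\<lambda>s. \<gamma> (x @ s @ y)"]
        by simp
    qed
  next
    assume R: "respects_IT P ltP \<gamma>"
    show "\<forall>g\<in>gensT P ltP. \<forall>x y. set x \<subseteq> P \<longrightarrow> set y \<subseteq> P \<longrightarrow> pairing g (\<lambda>s. \<gamma> (x @ s @ y)) = 0"
    proof (intro ballI allI impI)
      fix g x y assume "g \<in> gensT P ltP" and xy: "set x \<subseteq> P" "set y \<subseteq> P"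
      then consider
          (comparable) a c where "g = word [c, a] - word [a, c]" "a \<in> P" "c \<in> P" "ltP a c"
        | (incomparable) a b where "g = word [b, a] - scal tt (word [a, b])"
            "a \<in> P" "b \<in> P" "a < b" "incP ltP a b"
        using \<open>g \<in> gensT P ltP\<close> unfolding gensT_def by (elim UnE CollectE exE conjE) blast+
      then show "pairing g (\<lambda>s. \<gamma> (x @ s @ y)) = 0"
      proof cases
        case (comparable a c)
        then show ?thesis
          using pairing_binomial[OF comparable_ne[OF comparable(2-4)], of 1 "\<lambda>s. \<gamma> (x @ s @ y)"]
            respects_ITD(1)[OF R xy comparable(2-4)] by simp
      next
        case (incomparable a b)
        then show ?thesis
          using pairing_binomial[OF less_ne[OF incomparable(4)], of tt "\<lambda>s. \<gamma> (x @ s @ y)"]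
            respects_ITD(2)[OF R xy incomparable(2-5)] by simp
      qed
    qed
  qed
qed

lemma finite_supp_gensT: "g \<in> gensT P ltP \<Longrightarrow> finite (supp g)"
  using finite_supp_binomial[where c = 1] finite_supp_binomial[where c = tt]
  by (auto simp: gensT_def)

lemma perp_IT_iff:
  assumes "nuio P ltP"
  shows "\<gamma> \<in> perp P (IT P ltP) \<longleftrightarrow> \<gamma> \<in> fsupp P \<and> respects_IT P ltP \<gamma>"
proof -
  have "(\<forall>z\<in>ideal_gen P (gensT P ltP). pairing z \<gamma> = 0) \<longleftrightarrow> respects_IT P ltP \<gamma>"
    using annihilates_ideal_gen_iff[of "gensT P ltP" P \<gamma>] finite_supp_gensT
      gensT_annihilated_iff[OF assms] by blast
  then show ?thesis by (simp add: perp_def IT_def)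
qed

lemma invP_swap_comparable:
  assumes "ltP a c"
  shows "invP ltP (x @ [c, a] @ y) = invP ltP (x @ [a, c] @ y)"
  using inversions_swap[of "\<lambda>x y. y < x \<and> incP ltP x y" x c a y] assms
  by (simp add: invP_eq_inversions incP_def)

lemma invP_swap_incomparable:
  assumes "a < b" "incP ltP a b"
  shows "invP ltP (x @ [b, a] @ y) = invP ltP (x @ [a, b] @ y) + 1"
  using assms less_imp_not_less[OF assms(1)] inversions_swap[of "\<lambda>x y. y < x \<and> incP ltP x y" x b a y]
  by (simp add: invP_eq_inversions incP_def)

lemma respects_IT_Wt: "respects_IT P ltP (Wt ltP \<beta>)"
  unfolding respects_IT_def Wt_def
  by (auto simp: invP_swap_comparable[simplified] invP_swap_incomparable[simplified] add_mset_commute)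

lemma tt_nonzero: "tt \<noteq> 0"
  by (simp add: tt_def Zero_fract_def eq_fract)

lemma Wt_eq_0_iff: "Wt ltP \<beta> w = 0 \<longleftrightarrow> mset w \<noteq> \<beta>"
  by (simp add: Wt_def tt_nonzero)

lemma Wt_eq_iff: "Wt ltP \<beta> = Wt ltP \<beta>' \<longleftrightarrow> \<beta> = \<beta>'"
proof
  assume eq: "Wt ltP \<beta> = Wt ltP \<beta>'"
  obtain w where w: "mset w = \<beta>" using ex_mset by blast
  then have "Wt ltP \<beta>' w \<noteq> 0" using eq by (metis Wt_eq_0_iff)
  with w show "\<beta> = \<beta>'" by (simp add: Wt_eq_0_iff)
qed simp

lemma Wt_in_fsupp:
  assumes "set_mset \<beta> \<subseteq> P" shows "Wt ltP \<beta> \<in> fsupp P"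
proof -
  have "supp (Wt ltP \<beta>) \<subseteq> {w. set w \<subseteq> set_mset \<beta> \<and> length w = size \<beta>}"
    by (auto simp: Wt_eq_0_iff)
  then have "finite (supp (Wt ltP \<beta>))"
    by (rule finite_subset) (simp add: finite_lists_length_eq)
  with assms show ?thesis by (auto simp: fsupp_def Wt_eq_0_iff)
qed

lemma Wt_in_perp_IT: "nuio P ltP \<Longrightarrow> set_mset \<beta> \<subseteq> P \<Longrightarrow> Wt ltP \<beta> \<in> perp P (IT P ltP)"
  by (simp add: perp_IT_iff respects_IT_Wt Wt_in_fsupp)

lemma respects_IT_sort:
  assumes N: "nuio P ltP" and \<gamma>: "respects_IT P ltP \<gamma>" and "set w \<subseteq> P"
  shows "\<gamma> w = tt ^ invP ltP w * \<gamma> (sort w)"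
  using \<open>set w \<subseteq> P\<close>
proof (induction "inversions (\<lambda>x y. y < x) w" arbitrary: w rule: less_induct)
  case less
  show ?case
  proof (cases "sorted w")
    case True
    then show ?thesis by (simp add: invP_eq_inversions inversions_sorted sorted_sort_id)
  next
    case False
    then obtain x a b y where w: "w = x @ [b, a] @ y" and "a < b"
      by (rule unsorted_obtains_descent)
    let ?w' = "x @ [a, b] @ y"
    have "inversions (\<lambda>x y. y < x) w = inversions (\<lambda>x y. y < x) ?w' + 1"
      using \<open>a < b\<close> less_imp_not_less[OF \<open>a < b\<close>] inversions_swap[of "\<lambda>x y. y < x" x b a y] w by simp
    moreover have "set ?w' \<subseteq> P" using less.prems w by auto
    ultimately have IH: "\<gamma> ?w' = tt ^ invP ltP ?w' * \<gamma> (sort ?w')"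
      using less.hyps by simp
    have "mset ?w' = mset w" using w by (simp add: add_mset_commute)
    then have sort: "sort ?w' = sort w" by (metis sorted_list_of_multiset_mset)
    have P: "set x \<subseteq> P" "set y \<subseteq> P" "a \<in> P" "b \<in> P" using less.prems w by auto
    have "\<not> ltP b a" using nuio_less[OF N P(4,3)] \<open>a < b\<close> by auto
    then consider "ltP a b" | "incP ltP a b" by (auto simp: incP_def)
    then show ?thesis
    proof cases
      case 1
      have "\<gamma> w = \<gamma> ?w'" unfolding w by (rule respects_ITD(1)[OF \<gamma> P 1])
      moreover have "invP ltP w = invP ltP ?w'" unfolding w by (rule invP_swap_comparable[of ltP, OF 1])
      ultimately show ?thesis using IH sort by simp
    next
      case 2
      have "\<gamma> w = tt * \<gamma> ?w'" unfolding w by (rule respects_ITD(2)[OF \<gamma> P \<open>a < b\<close> 2])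
      moreover have "invP ltP w = invP ltP ?w' + 1"
        unfolding w by (rule invP_swap_incomparable[OF \<open>a < b\<close> 2])
      ultimately show ?thesis using IH sort by simp
    qed
  qed
qed

lemma respects_IT_expansion:
  assumes N: "nuio P ltP" and "\<gamma> \<in> fsupp P" and \<gamma>: "respects_IT P ltP \<gamma>"
  shows "(\<Sum>\<beta>\<in>mset ` supp \<gamma>. scal (\<gamma> (sorted_list_of_multiset \<beta>)) (Wt ltP \<beta>)) = \<gamma>"
proof
  fix w
  have fin: "finite (supp \<gamma>)" and sub: "\<And>v. v \<in> supp \<gamma> \<Longrightarrow> set v \<subseteq> P"
    using \<open>\<gamma> \<in> fsupp P\<close> by (auto simp: fsupp_def)
  have "(\<Sum>\<beta>\<in>mset ` supp \<gamma>. scal (\<gamma> (sorted_list_of_multiset \<beta>)) (Wt ltP \<beta>)) w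
        = (\<Sum>\<beta>\<in>mset ` supp \<gamma>. if \<beta> = mset w then tt ^ invP ltP w * \<gamma> (sort w) else 0)"
    unfolding sum_apply
  proof (rule sum.cong)
    fix \<beta> show "scal (\<gamma> (sorted_list_of_multiset \<beta>)) (Wt ltP \<beta>) w
      = (if \<beta> = mset w then tt ^ invP ltP w * \<gamma> (sort w) else 0)"
      by (cases "\<beta> = mset w") (simp_all add: scal_def Wt_def)
  qed simp
  also have "\<dots> = (if mset w \<in> mset ` supp \<gamma> then tt ^ invP ltP w * \<gamma> (sort w) else 0)"
    using fin by simp
  also have "\<dots> = \<gamma> w"
  proof (cases "mset w \<in> mset ` supp \<gamma>")
    case True
    then obtain v where v: "v \<in> supp \<gamma>" "mset w = mset v" by blast
    have "set w \<subseteq> P" using sub[OF v(1)] mset_eq_setD[OF v(2)] by simp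
    then have "\<gamma> w = tt ^ invP ltP w * \<gamma> (sort w)" by (rule respects_IT_sort[OF N \<gamma>])
    with True show ?thesis by simp
  next
    case False
    then have "w \<notin> supp \<gamma>" by (metis image_eqI)
    with False show ?thesis by simp
  qed
  finally show "(\<Sum>\<beta>\<in>mset ` supp \<gamma>. scal (\<gamma> (sorted_list_of_multiset \<beta>)) (Wt ltP \<beta>)) w = \<gamma> w" .
qed

section \<open>Independence and spanning\<close>

lemma independent_if_private_points:
  assumes "\<And>v. v \<in> S \<Longrightarrow> \<exists>w. v w \<noteq> 0 \<and> (\<forall>v'\<in>S - {v}. v' w = 0)"
  shows "\<not> word_fun.dependent S"
proof
  assume "word_fun.dependent S"
  then obtain T c v where T: "finite T" "T \<subseteq> S" "(\<Sum>v\<in>T. scal (c v) v) = 0"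
    and v: "v \<in> T" "c v \<noteq> 0"
    unfolding word_fun.dependent_explicit by blast
  obtain w where w: "v w \<noteq> 0" "\<forall>v'\<in>S - {v}. v' w = 0"
    using assms v(1) T(2) by blast
  have "0 = (\<Sum>v'\<in>T. c v' * v' w)"
    using arg_cong[OF T(3), of "\<lambda>f. f w"] by (simp add: sum_apply scal_def)
  also have "\<dots> = c v * v w + (\<Sum>v'\<in>T - {v}. c v' * v' w)"
    using T(1) v(1) by (rule sum.remove)
  also have "(\<Sum>v'\<in>T - {v}. c v' * v' w) = 0"
    using T(2) w(2) by (intro sum.neutral) auto
  finally show False using v(2) w(1) by simp
qed

lemma subspace_fsupp: "word_fun.subspace (fsupp P)"
proof (rule word_fun.subspaceI)
  fix f g assume f: "f \<in> fsupp P" and g: "g \<in> fsupp P"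
  have "finite (supp (f + g))"
    using f g by (intro finite_supp_add) (simp_all add: fsupp_def)
  moreover have "set w \<subseteq> P" if "(f + g) w \<noteq> 0" for w
  proof -
    from that have "f w \<noteq> 0 \<or> g w \<noteq> 0" by auto
    with f g show ?thesis by (auto simp: fsupp_def)
  qed
  ultimately show "f + g \<in> fsupp P" by (simp add: fsupp_def)
next
  fix c f assume "f \<in> fsupp P"
  then show "scal c f \<in> fsupp P" by (auto simp: fsupp_def finite_supp_scal scal_def)
qed (simp add: fsupp_def)

lemma subspace_perp: "word_fun.subspace (perp P I)"
proof -
  have "word_fun.subspace {\<gamma>. \<forall>z\<in>I. pairing z \<gamma> = 0}"
    by (rule word_fun.subspaceI) (simp_all add: pairing_add_right pairing_scal_right pairing_def[of _ 0])
  moreover have "perp P I = fsupp P \<inter> {\<gamma>. \<forall>z\<in>I. pairing z \<gamma> = 0}"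
    by (auto simp: perp_def)
  ultimately show ?thesis using word_fun.subspace_inter[OF subspace_fsupp] by simp
qed

lemma independent_Wt: "\<not> word_fun.dependent (Wt ltP ` B)"
proof (rule independent_if_private_points)
  fix v assume "v \<in> Wt ltP ` B"
  then obtain \<beta> where v: "v = Wt ltP \<beta>" by blast
  obtain w where "mset w = \<beta>" using ex_mset by blast
  then show "\<exists>w. v w \<noteq> 0 \<and> (\<forall>v'\<in>Wt ltP ` B - {v}. v' w = 0)"
    using v by (auto simp: Wt_eq_0_iff Wt_eq_iff)
qed

lemma span_Wt_eq_perp_IT:
  assumes "nuio P ltP"
  shows "word_fun.span (Wt ltP ` {\<beta>. set_mset \<beta> \<subseteq> P}) = perp P (IT P ltP)"
proof
  show "word_fun.span (Wt ltP ` {\<beta>. set_mset \<beta> \<subseteq> P}) \<subseteq> perp P (IT P ltP)"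
    using Wt_in_perp_IT[OF assms] by (intro word_fun.span_minimal subspace_perp) auto
next
  show "perp P (IT P ltP) \<subseteq> word_fun.span (Wt ltP ` {\<beta>. set_mset \<beta> \<subseteq> P})"
  proof
    fix \<gamma> assume "\<gamma> \<in> perp P (IT P ltP)"
    then have \<gamma>: "\<gamma> \<in> fsupp P" "respects_IT P ltP \<gamma>" using perp_IT_iff[OF assms] by auto
    then have "mset ` supp \<gamma> \<subseteq> {\<beta>. set_mset \<beta> \<subseteq> P}"
      by (fastforce simp: fsupp_def)
    then have "(\<Sum>\<beta>\<in>mset ` supp \<gamma>. scal (\<gamma> (sorted_list_of_multiset \<beta>)) (Wt ltP \<beta>))
               \<in> word_fun.span (Wt ltP ` {\<beta>. set_mset \<beta> \<subseteq> P})"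
      by (intro word_fun.span_sum word_fun.span_scale word_fun.span_base) auto
    then show "\<gamma> \<in> word_fun.span (Wt ltP ` {\<beta>. set_mset \<beta> \<subseteq> P})"
      using respects_IT_expansion[OF assms \<gamma>] by simp
  qed
qed

theorem mainTheorem6:
  fixes P :: "'a::linorder set" and ltP :: "'a \<Rightarrow> 'a \<Rightarrow> bool"
  assumes "nuio P ltP"
  shows "(\<forall>\<beta>. set_mset \<beta> \<subseteq> P \<longrightarrow> Wt ltP \<beta> \<in> perp P (IT P ltP))
    \<and> inj_on (Wt ltP) {\<beta>. set_mset \<beta> \<subseteq> P}
    \<and> \<not> module.dependent scal (Wt ltP ` {\<beta>. set_mset \<beta> \<subseteq> P})
    \<and> module.span scal (Wt ltP ` {\<beta>. set_mset \<beta> \<subseteq> P}) = perp P (IT P ltP)"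
  using Wt_in_perp_IT[OF assms] independent_Wt span_Wt_eq_perp_IT[OF assms]
  by (simp add: inj_on_def Wt_eq_iff)

end
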